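(* Let $h_U := \frac{1}{\operatorname{Im}\alpha}\, h$, where $h$ is the hermitian metric on $\mathbb C\times\mathbb H\times\mathbb H$ described in the context. Then for every $s_0\in\mathbb H$ the restriction of $h_U$ to the complex submanifold $\{s=s_0\}=\{(z,\alpha,s_0)\}$ is a Kähler metric, and for every $\alpha_0\in\mathbb H$ the restriction of $h_U$ to the complex submanifold $\{\alpha=\alpha_0\}=\{(z,\alpha_0,s)\}$ is a Kähler metric. Since $h_U$ is invariant under the group $\tilde G$, the same holds on the quotient $(\mathbb C\times\mathbb H\times\mathbb H)/\tilde G$ for the fibers of the two holomorphic maps $\nu$ and $\eta$ induced by $(z,\alpha,s)\mapsto s$ and $(z,\alpha,s)\mapsto \alpha$ respectively.
   Context: $\mathbb H=\{w\in\mathbb C:\operatorname{Im} w>0\}$. On $\mathbb C\times\mathbb H\times\mathbb H$ use holomorphic coordinates $(z,\alpha,s)$. (Here $s$ parametrizes the elliptic curve $X_s=\mathbb C/(\mathbb Z\oplus s\mathbb Z)$ and $\alpha$ parametrizes the complexified Kähler class $\frac{\alpha}{\operatorname{Im} s}\frac{i}{2}dz\wedge d\bar z$ on $X_s$, whose volume is $\operatorname{Im}\alpha$.) Define the functions $g_{\mathcal X/S}=\frac{\alpha-\bar\alpha}{s-\bar s}=\frac{\operatorname{Im}\alpha}{\operatorname{Im}s}$, $g_{L^2}=\frac{i}{2}\frac{1}{\alpha-\bar\alpha}=\frac{1}{4\operatorname{Im}\alpha}$, $g_{WP}=\frac{i}{2}\frac{\alpha-\bar\alpha}{(s-\bar s)^2}=\frac{\operatorname{Im}\alpha}{4(\operatorname{Im}s)^2}$,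 $a=-\frac{z-\bar z}{s-\bar s}=-\frac{\operatorname{Im}z}{\operatorname{Im}s}$. Let $h=\sum_{j,k} h_{j\bar k}\,dw_j\otimes d\bar w_k$ (with $(w_1,w_2,w_3)=(z,\alpha,s)$) be the hermitian metric whose coefficient matrix is $\begin{pmatrix} g_{\mathcal X/S} & 0 & g_{\mathcal X/S}\bar a\\ 0 & g_{L^2} & 0\\ a\, g_{\mathcal X/S} & 0 & g_{WP}+a\, g_{\mathcal X/S}\,\bar a\end{pmatrix}$, i.e. $h=g_{\mathcal X/S}\,|dz+a\,ds|^2+g_{L^2}|d\alpha|^2+g_{WP}|ds|^2$. (This is the pullback of the paper's natural hermitian metric $\omega$ on the fiber product of the universal family of marked elliptic curves with its bundle of complexified Kähler cones.) The group $\tilde G=\{g_{n,m}:(z,\alpha,s)\mapsto(z+n+ms,\alpha,s)\mid n,m\in\mathbb Z\}$ acts freely and properly, and $h$ is $\tilde G$-invariant. A hermitian metric $\sum h_{j\bar k}dw_j\otimes d\bar w_k$ on a complex manifold is Kähler if its associated real $(1,1)$-form $\frac{i}{2}\sum h_{j\bar k}\,dw_j\wedge d\bar w_k$ is closed; restriction to a complex submanifold means restriction of the hermitian form to its tangent vectors. *)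

theory Defs
  imports "HOL-Analysis.Analysis"
begin

definition gXS :: "complex \<Rightarrow> complex \<Rightarrow> complex" where
  "gXS \<alpha> s = (\<alpha> - cnj \<alpha>) / (s - cnj s)"

definition gL2 :: "complex \<Rightarrow> complex" where
  "gL2 \<alpha> = (\<i> / 2) * (1 / (\<alpha> - cnj \<alpha>))"

definition gWP :: "complex \<Rightarrow> complex \<Rightarrow> complex" where
  "gWP \<alpha> s = (\<i> / 2) * ((\<alpha> - cnj \<alpha>) / (s - cnj s)^2)"

definition acoef :: "complex \<Rightarrow> complex \<Rightarrow> complex" where
  "acoef z s = - ((z - cnj z) / (s - cnj s))"

text \<open>The hermitian form h at the point p = (z, alpha, s), evaluated on tangent vectors
  v = (v1,v2,v3), w = (w1,w2,w3):  h(v,w) = sum_{j,k} h_{j kbar} v_j conj(w_k).\<close>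

definition hform :: "complex \<times> complex \<times> complex \<Rightarrow> complex \<times> complex \<times> complex
    \<Rightarrow> complex \<times> complex \<times> complex \<Rightarrow> complex" where
  "hform p v w = (case p of (z, \<alpha>, s) \<Rightarrow> case v of (v1, v2, v3) \<Rightarrow> case w of (w1, w2, w3) \<Rightarrow>
       gXS \<alpha> s * v1 * cnj w1
     + gXS \<alpha> s * cnj (acoef z s) * v1 * cnj w3
     + gL2 \<alpha> * v2 * cnj w2
     + acoef z s * gXS \<alpha> s * v3 * cnj w1
     + (gWP \<alpha> s + acoef z s * gXS \<alpha> s * cnj (acoef z s)) * v3 * cnj w3)"

definition hUform :: "complex \<times> complex \<times> complex \<Rightarrow> complex \<times> complex \<times> complex
    \<Rightarrow> complex \<times> complex \<times> complex \<Rightarrow> complex" where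
  "hUform p v w = (case p of (z, \<alpha>, s) \<Rightarrow> hform p v w / complex_of_real (Im \<alpha>))"

definition gact :: "int \<Rightarrow> int \<Rightarrow> complex \<times> complex \<times> complex \<Rightarrow> complex \<times> complex \<times> complex" where
  "gact n m p = (case p of (z, \<alpha>, s) \<Rightarrow> (z + of_int n + of_int m * s, \<alpha>, s))"

text \<open>Differential of g_{n,m} (independent of the base point): dz + m ds, d alpha, ds.\<close>
definition dgact :: "int \<Rightarrow> complex \<times> complex \<times> complex \<Rightarrow> complex \<times> complex \<times> complex" where
  "dgact m v = (case v of (v1, v2, v3) \<Rightarrow> (v1 + of_int m * v3, v2, v3))"

text \<open>A metric on U \<subseteq> C^n is given by its coefficient matrix H p j k = h_{j kbar}(p).\<close>

definition hermitian_metric_on ::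
    "(complex^'n) set \<Rightarrow> (complex^'n \<Rightarrow> 'n \<Rightarrow> 'n \<Rightarrow> complex) \<Rightarrow> bool" where
  "hermitian_metric_on U H \<longleftrightarrow>
     (\<forall>p\<in>U. \<forall>j k. H p k j = cnj (H p j k)) \<and>
     (\<forall>p\<in>U. \<forall>v::complex^'n. v \<noteq> 0 \<longrightarrow>
         0 < Re (\<Sum>j\<in>UNIV. \<Sum>k\<in>UNIV. H p j k * v$j * cnj (v$k))) \<and>
     (\<forall>j k. (\<lambda>p. H p j k) differentiable_on U)"

definition dRe :: "(complex^'n \<Rightarrow> complex) \<Rightarrow> 'n \<Rightarrow> complex^'n \<Rightarrow> complex" where
  "dRe f j p = vector_derivative (\<lambda>t::real. f (p + t *\<^sub>R axis j 1)) (at 0)"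

definition dIm :: "(complex^'n \<Rightarrow> complex) \<Rightarrow> 'n \<Rightarrow> complex^'n \<Rightarrow> complex" where
  "dIm f j p = vector_derivative (\<lambda>t::real. f (p + t *\<^sub>R axis j \<i>)) (at 0)"

definition wirt :: "(complex^'n \<Rightarrow> complex) \<Rightarrow> 'n \<Rightarrow> complex^'n \<Rightarrow> complex" where
  "wirt f j p = (dRe f j p - \<i> * dIm f j p) / 2"

definition wirtbar :: "(complex^'n \<Rightarrow> complex) \<Rightarrow> 'n \<Rightarrow> complex^'n \<Rightarrow> complex" where
  "wirtbar f j p = (dRe f j p + \<i> * dIm f j p) / 2"

text \<open>Closedness of (i/2) sum h_{j kbar} dw_j /\ dwbar_k written out in coordinates:
  the (2,1)-part vanishes iff d_l h_{j kbar} = d_j h_{l kbar}, and the (1,2)-part vanishes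
  iff dbar_l h_{j kbar} = dbar_k h_{j lbar}.\<close>

definition kahler_on ::
    "(complex^'n) set \<Rightarrow> (complex^'n \<Rightarrow> 'n \<Rightarrow> 'n \<Rightarrow> complex) \<Rightarrow> bool" where
  "kahler_on U H \<longleftrightarrow> hermitian_metric_on U H \<and>
     (\<forall>p\<in>U. \<forall>j k l.
        wirt (\<lambda>q. H q j k) l p = wirt (\<lambda>q. H q l k) j p \<and>
        wirtbar (\<lambda>q. H q j k) l p = wirtbar (\<lambda>q. H q j l) k p)"

text \<open>Slice {s = s0}: coordinates q = (z, alpha) = (q$1, q$2), alpha in H.
  Embedding (z,alpha) \<mapsto> (z,alpha,s0); its differential is (u1,u2) \<mapsto> (u1,u2,0).\<close>

definition slice_s_metric :: "complex \<Rightarrow> complex^2 \<Rightarrow> 2 \<Rightarrow> 2 \<Rightarrow> complex" where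
  "slice_s_metric s0 q j k =
     hUform (q$1, q$2, s0)
       ((axis j (1::complex))$1, (axis j (1::complex))$2, 0)
       ((axis k (1::complex))$1, (axis k (1::complex))$2, 0)"

text \<open>Slice {alpha = alpha0}: coordinates q = (z, s) = (q$1, q$2), s in H.
  Embedding (z,s) \<mapsto> (z,alpha0,s); its differential is (u1,u2) \<mapsto> (u1,0,u2).\<close>

definition slice_alpha_metric :: "complex \<Rightarrow> complex^2 \<Rightarrow> 2 \<Rightarrow> 2 \<Rightarrow> complex" where
  "slice_alpha_metric \<alpha>0 q j k =
     hUform (q$1, \<alpha>0, q$2)
       ((axis j (1::complex))$1, 0, (axis j (1::complex))$2)
       ((axis k (1::complex))$1, 0, (axis k (1::complex))$2)"

text \<open>Both slices are parametrized by C x H = {q. Im (q$2) > 0}.\<close>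
definition CxH :: "(complex^2) set" where
  "CxH = {q. 0 < Im (q$2)}"

end

theory Submission
  imports Defs
begin

(* On both slices {s = s0} and {alpha = alpha0} the restriction of
   h_U = h / Im alpha has coefficients that are REAL and depend only on the imaginary
   parts y = Im (q$1), t = Im (q$2) of the two remaining coordinates:
     on {s = s0}:      [[1 / Im s0, 0], [0, 1/(4 t^2)]],
     on {alpha = a0}:  [[1/t, -y/t^2], [-y/t^2, 1/(4 t^2) + y^2/t^3]].
   For such a coefficient matrix G the real partial derivatives along Re w_l vanish,
   so both Wirtinger derivatives are multiples of the partial derivative along Im w_l,
   and the two closedness conditions of kahler_on reduce to the single real condition
   d_t G_{1k} = d_y G_{2k}; hermitian symmetry reduces to symmetry of G and positivity
   to the determinant criterion for a real symmetric 2x2 matrix. *)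

section \<open>Wirtinger derivatives of functions of the imaginary parts\<close>

lemma differentiable_Im_nth [derivative_intros]: "(\<lambda>p::complex^'n. Im (p $ i)) differentiable F"
  by (rule bounded_linear_imp_differentiable)
    (rule bounded_linear_compose[OF bounded_linear_Im bounded_linear_vec_nth])

lemma open_CxH: "open CxH"
  unfolding CxH_def
  by (rule open_Collect_less) (auto intro!: continuous_intros
       linear_continuous_on bounded_linear_compose[OF bounded_linear_Im bounded_linear_vec_nth])

text \<open>A function on \<open>C \<times> H\<close> depending only on imaginary parts is constant along real
  directions, so its derivative along \<open>Re w\<^sub>l\<close> vanishes.\<close>

lemma dRe_Im_dependent:
  fixes f :: "complex^2 \<Rightarrow> complex" and G :: "real \<Rightarrow> real \<Rightarrow> real"
  assumes f: "\<And>q. q \<in> CxH \<Longrightarrow> f q = of_real (G (Im (q$1)) (Im (q$2)))"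
    and p: "p \<in> CxH"
  shows "dRe f l p = 0"
proof -
  have "(\<lambda>t::real. f (p + t *\<^sub>R axis l 1)) = (\<lambda>t. of_real (G (Im (p$1)) (Im (p$2))))"
  proof
    fix t :: real
    have "p + t *\<^sub>R axis l 1 \<in> CxH" using p by (simp add: CxH_def axis_def)
    then show "f (p + t *\<^sub>R axis l 1) = of_real (G (Im (p$1)) (Im (p$2)))"
      using f by (simp add: axis_def)
  qed
  then show ?thesis unfolding dRe_def by simp
qed

lemma dIm_Im_dependent:
  fixes f :: "complex^2 \<Rightarrow> complex" and G :: "real \<Rightarrow> real \<Rightarrow> real"
  assumes f: "\<And>q. q \<in> CxH \<Longrightarrow> f q = of_real (G (Im (q$1)) (Im (q$2)))"
    and Dy: "\<And>y t. 0 < t \<Longrightarrow> ((\<lambda>y. G y t) has_real_derivative Dy y t) (at y)"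
    and Dt: "\<And>y t. 0 < t \<Longrightarrow> ((\<lambda>t. G y t) has_real_derivative Dt y t) (at t)"
    and p: "p \<in> CxH"
  shows "dIm f l p = of_real (if l = 1 then Dy (Im (p$1)) (Im (p$2)) else Dt (Im (p$1)) (Im (p$2)))"
proof -
  let ?y = "Im (p$1)" and ?t = "Im (p$2)"
  have t: "0 < ?t" using p by (simp add: CxH_def)
  text \<open>\<open>S\<close> is the open set of parameters for which the line \<open>p + x \<i> e\<^sub>l\<close> stays in \<open>C \<times> H\<close>.\<close>
  define S where "S = {x::real. 0 < ?t + (if l = 2 then x else 0)}"
  have "open S"
  proof (cases "l = 2")
    case True
    then have "S = {-?t<..}" unfolding S_def by auto
    then show ?thesis by simp
  qed (use t in \<open>simp add: S_def\<close>)
  moreover have "0 \<in> S" unfolding S_def using t by simp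
  moreover have "f (p + x *\<^sub>R axis l \<i>) =
      of_real (G (?y + (if l = 1 then x else 0)) (?t + (if l = 2 then x else 0)))" if "x \<in> S" for x
  proof -
    have "p + x *\<^sub>R axis l \<i> \<in> CxH"
      using that by (simp add: CxH_def axis_def S_def split: if_splits)
    then show ?thesis using f by (simp add: axis_def)
  qed
  moreover have "((\<lambda>x. of_real (G (?y + (if l = 1 then x else 0)) (?t + (if l = 2 then x else 0)))
      :: complex) has_vector_derivative of_real (if l = 1 then Dy ?y ?t else Dt ?y ?t)) (at 0)"
  proof (cases "l = 1")
    case True
    have "((\<lambda>x. G (?y + x) ?t) has_real_derivative Dy ?y ?t) (at 0)"
      using DERIV_shift[of "\<lambda>y. G y ?t" "Dy ?y ?t" 0 ?y] Dy[OF t, of ?y] by (simp add: add.commute)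
    then show ?thesis using True by (auto intro!: has_vector_derivative_of_real)
  next
    case False
    then have "l = 2" using exhaust_2[of l] by auto
    have "((\<lambda>x. G ?y (?t + x)) has_real_derivative Dt ?y ?t) (at 0)"
      using DERIV_shift[of "\<lambda>t. G ?y t" "Dt ?y ?t" 0 ?t] Dt[OF t, of ?y] by (simp add: add.commute)
    then show ?thesis using False \<open>l = 2\<close> by (auto intro!: has_vector_derivative_of_real)
  qed
  ultimately have "((\<lambda>x. f (p + x *\<^sub>R axis l \<i>)) has_vector_derivative
      of_real (if l = 1 then Dy ?y ?t else Dt ?y ?t)) (at 0)"
    unfolding has_vector_derivative_def
    by (metis (no_types, lifting) has_derivative_transform_within_open)
  then show ?thesis unfolding dIm_def by (rule vector_derivative_at)
qed

lemma differentiable_on_CxH_of_real: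
  fixes f :: "complex^2 \<Rightarrow> complex"
  assumes f: "\<And>q. q \<in> CxH \<Longrightarrow> f q = of_real (g q)"
    and g: "\<And>p. p \<in> CxH \<Longrightarrow> g differentiable at p"
  shows "f differentiable_on CxH"
proof (rule differentiable_at_imp_differentiable_on)
  fix p assume p: "p \<in> CxH"
  from g[OF p] obtain D where "(g has_derivative D) (at p)" by (auto simp: differentiable_def)
  then have "((\<lambda>q. complex_of_real (g q)) has_derivative (\<lambda>x. of_real (D x))) (at p)"
    by (auto intro!: derivative_intros)
  then have "(f has_derivative (\<lambda>x. of_real (D x))) (at p)"
    by (rule has_derivative_transform_within_open[OF _ open_CxH p]) (simp add: f)
  then show "f differentiable at p" by (auto simp: differentiable_def)
qed

text \<open>Completing the square: \<open>a Q = |a v\<^sub>1 + b v\<^sub>2|\<^sup>2 + (a c - b\<^sup>2) |v\<^sub>2|\<^sup>2\<close>.\<close>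

lemma real_sym2_form_pos:
  fixes a b c :: real and v1 v2 :: complex
  assumes a: "0 < a" and det: "0 < a * c - b^2" and v: "v1 \<noteq> 0 \<or> v2 \<noteq> 0"
  shows "0 < Re (a * v1 * cnj v1 + b * v1 * cnj v2 + (b * v2 * cnj v1 + c * v2 * cnj v2))"
proof -
  let ?Q = "Re (a * v1 * cnj v1 + b * v1 * cnj v2 + (b * v2 * cnj v1 + c * v2 * cnj v2))"
  have square: "a * ?Q = (Re (a * v1 + b * v2))^2 + (Im (a * v1 + b * v2))^2
      + (a * c - b^2) * ((Re v2)^2 + (Im v2)^2)"
    by (simp add: power2_eq_square algebra_simps)
  have "0 < a * ?Q"
  proof (cases "v2 = 0")
    case True
    then have "a * ?Q = a * (a * ((Re v1)^2 + (Im v1)^2))" by (simp add: power2_eq_square algebra_simps)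
    moreover have "0 < (Re v1)^2 + (Im v1)^2"
      using v True by (simp add: complex_eq_iff sum_power2_gt_zero_iff)
    ultimately show ?thesis using a by (simp add: mult_pos_pos)
  next
    case False
    then have "0 < (Re v2)^2 + (Im v2)^2" by (simp add: complex_eq_iff sum_power2_gt_zero_iff)
    then show ?thesis unfolding square using det by (intro add_nonneg_pos) auto
  qed
  then show ?thesis using a by (simp add: zero_less_mult_iff)
qed

section \<open>A Kaehler criterion for real metrics depending on imaginary parts\<close>

lemma kahler_on_CxH_Im_dependent:
  fixes H :: "complex^2 \<Rightarrow> 2 \<Rightarrow> 2 \<Rightarrow> complex" and G Dy Dt :: "2 \<Rightarrow> 2 \<Rightarrow> real \<Rightarrow> real \<Rightarrow> real"
  assumes H: "\<And>q j k. q \<in> CxH \<Longrightarrow> H q j k = of_real (G j k (Im (q$1)) (Im (q$2)))"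
    and sym: "\<And>j k. G j k = G k j"
    and Dy: "\<And>j k y t. 0 < t \<Longrightarrow> ((\<lambda>y. G j k y t) has_real_derivative Dy j k y t) (at y)"
    and Dt: "\<And>j k y t. 0 < t \<Longrightarrow> ((\<lambda>t. G j k y t) has_real_derivative Dt j k y t) (at t)"
    and closed: "\<And>k y t. 0 < t \<Longrightarrow> Dt 1 k y t = Dy 2 k y t"
    and pos: "\<And>y t. 0 < t \<Longrightarrow> 0 < G 1 1 y t"
    and det: "\<And>y t. 0 < t \<Longrightarrow> 0 < G 1 1 y t * G 2 2 y t - (G 1 2 y t)^2"
    and smooth: "\<And>j k p. p \<in> CxH \<Longrightarrow> (\<lambda>q. G j k (Im (q$1)) (Im (q$2))) differentiable at p"
  shows "kahler_on CxH H"
proof -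
  define D where "D (l::2) j k y t = (if l = 1 then Dy j k y t else Dt j k y t)" for l j k y t
  have dRe: "dRe (\<lambda>q. H q j k) l p = 0" if "p \<in> CxH" for j k l p
    by (rule dRe_Im_dependent[where G = "G j k"]) (use H that in auto)
  have dIm: "dIm (\<lambda>q. H q j k) l p = of_real (D l j k (Im (p$1)) (Im (p$2)))"
    if "p \<in> CxH" for j k l p
    unfolding D_def
    by (rule dIm_Im_dependent[where G = "G j k" and Dy = "Dy j k" and Dt = "Dt j k"])
      (use H Dy Dt that in auto)
  text \<open>The partial derivatives inherit the symmetry of \<open>G\<close> by uniqueness of derivatives.\<close>
  have D_sym: "D l j k y t = D l k j y t" if "0 < t" for l j k y t
  proof -
    have "Dy j k y t = Dy k j y t"
      using Dy[OF that, of j k y] Dy[OF that, of k j y] unfolding sym[of j k] by (rule DERIV_unique)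
    moreover have "Dt j k y t = Dt k j y t"
      using Dt[OF that, of j k y] Dt[OF that, of k j y] unfolding sym[of j k] by (rule DERIV_unique)
    ultimately show ?thesis unfolding D_def by simp
  qed
  have D_closed: "D l j k y t = D j l k y t" if "0 < t" for l j k y t
    using exhaust_2[of l] exhaust_2[of j] closed[OF that] unfolding D_def by auto
  have hermitian: "H p k j = cnj (H p j k)" if "p \<in> CxH" for p j k
    using H[OF that] sym[of k j] by simp
  have positive: "0 < Re (\<Sum>j\<in>UNIV. \<Sum>k\<in>UNIV. H p j k * v$j * cnj (v$k))"
    if p: "p \<in> CxH" and v: "v \<noteq> 0" for p v
  proof -
    have t: "0 < Im (p$2)" using p by (simp add: CxH_def)
    have nz: "v$1 \<noteq> 0 \<or> v$2 \<noteq> 0" using v by (metis exhaust_2 vec_eq_iff zero_index)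
    let ?G = "\<lambda>j k. complex_of_real (G j k (Im (p$1)) (Im (p$2)))"
    have "(\<Sum>j\<in>UNIV. \<Sum>k\<in>UNIV. H p j k * v$j * cnj (v$k))
        = ?G 1 1 * v$1 * cnj (v$1) + ?G 1 2 * v$1 * cnj (v$2)
          + (?G 1 2 * v$2 * cnj (v$1) + ?G 2 2 * v$2 * cnj (v$2))"
      by (simp add: sum_2 H[OF p] sym[of 2 1])
    then show ?thesis
      using real_sym2_form_pos[OF pos[OF t] det[OF t] nz] by (simp only:)
  qed
  have differentiable: "(\<lambda>p. H p j k) differentiable_on CxH" for j k
    by (rule differentiable_on_CxH_of_real[where g = "\<lambda>q. G j k (Im (q$1)) (Im (q$2))"])
      (use H smooth in auto)
  show ?thesis
    unfolding kahler_on_def hermitian_metric_on_def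
  proof (intro conjI ballI allI impI)
    fix p j k l assume p: "p \<in> CxH"
    have t: "0 < Im (p$2)" using p by (simp add: CxH_def)
    show "wirt (\<lambda>q. H q j k) l p = wirt (\<lambda>q. H q l k) j p"
      unfolding wirt_def dRe[OF p] dIm[OF p] using D_closed[OF t, of l j k] by simp
    show "wirtbar (\<lambda>q. H q j k) l p = wirtbar (\<lambda>q. H q j l) k p"
      unfolding wirtbar_def dRe[OF p] dIm[OF p]
      using D_closed[OF t, of l k j] D_sym[OF t, of l j k] D_sym[OF t, of k j l] by simp
  qed (use hermitian positive differentiable in blast)+
qed

definition sym2 :: "'a \<Rightarrow> 'a \<Rightarrow> 'a \<Rightarrow> 2 \<Rightarrow> 2 \<Rightarrow> 'a" where
  "sym2 a b c j k = (if j = 1 \<and> k = 1 then a else if j = 2 \<and> k = 2 then c else b)"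

lemma sym2_simps [simp]:
  "sym2 a b c 1 1 = a" "sym2 a b c 1 2 = b" "sym2 a b c 2 1 = b" "sym2 a b c 2 2 = c"
  by (auto simp: sym2_def)

lemma sym2_commute: "sym2 a b c j k = sym2 a b c k j"
  by (auto simp: sym2_def)

lemma sym2_fun: "(\<lambda>x. sym2 (a x) (b x) (c x) j k) = sym2 a b c j k"
  by (auto simp: sym2_def)

lemma has_real_derivative_sym2:
  assumes "(a has_real_derivative a') F" "(b has_real_derivative b') F" "(c has_real_derivative c') F"
  shows "((\<lambda>x. sym2 (a x) (b x) (c x) j k) has_real_derivative sym2 a' b' c' j k) F"
  using assms unfolding sym2_fun by (simp add: sym2_def)

lemma differentiable_sym2:
  assumes "a differentiable F" "b differentiable F" "c differentiable F"
  shows "(\<lambda>x. sym2 (a x) (b x) (c x) j k) differentiable F"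
  using assms unfolding sym2_fun by (simp add: sym2_def)

section \<open>The restriction of h_U to the slices {s = s0}\<close>

lemma slice_s_metric_eq:
  assumes s0: "0 < Im s0" and q: "q \<in> CxH"
  shows "slice_s_metric s0 q j k = of_real (sym2 (1 / Im s0) 0 (1 / (4 * Im (q$2)^2)) j k)"
proof -
  have "0 < Im (q$2)" using q by (simp add: CxH_def)
  then show ?thesis
    using exhaust_2[of j] exhaust_2[of k] s0
    by (auto simp: slice_s_metric_def hUform_def hform_def gXS_def gL2_def gWP_def acoef_def
        axis_def complex_diff_cnj field_simps power2_eq_square)
qed

lemma slice_s_kahler:
  assumes s0: "0 < Im s0"
  shows "kahler_on CxH (slice_s_metric s0)"
proof (rule kahler_on_CxH_Im_dependent[where G = "\<lambda>j k y t. sym2 (1 / Im s0) 0 (1 / (4 * t^2)) j k"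
      and Dy = "\<lambda>j k y t. sym2 0 0 0 j k" and Dt = "\<lambda>j k y t. sym2 0 0 (- 1 / (2 * t^3)) j k"])
  fix j k :: 2 and y t :: real assume t: "0 < t"
  show "((\<lambda>y. sym2 (1 / Im s0) 0 (1 / (4 * t^2)) j k) has_real_derivative sym2 0 0 0 j k) (at y)"
    by (rule has_real_derivative_sym2) auto
  show "((\<lambda>t. sym2 (1 / Im s0) 0 (1 / (4 * t^2)) j k) has_real_derivative
      sym2 0 0 (- 1 / (2 * t^3)) j k) (at t)"
    using t by (intro has_real_derivative_sym2)
      (auto intro!: derivative_eq_intros simp: field_simps power2_eq_square power3_eq_cube)
  show "sym2 0 0 (- 1 / (2 * t^3)) 1 k = sym2 0 0 0 2 k"
    using exhaust_2[of k] by auto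
  show "0 < sym2 (1 / Im s0) 0 (1 / (4 * t^2)) 1 1" using s0 by simp
  show "0 < sym2 (1 / Im s0) 0 (1 / (4 * t^2)) 1 1 * sym2 (1 / Im s0) 0 (1 / (4 * t^2)) 2 2
      - (sym2 (1 / Im s0) 0 (1 / (4 * t^2)) 1 2)^2"
    using s0 t by (simp add: mult_pos_pos)
next
  fix p :: "complex^2" and j k :: 2 assume "p \<in> CxH"
  then have "Im (p$2) \<noteq> 0" by (simp add: CxH_def)
  then show "(\<lambda>q. sym2 (1 / Im s0) 0 (1 / (4 * Im (q$2)^2)) j k) differentiable at p"
    by (intro differentiable_sym2) (auto intro!: derivative_intros)
qed (use s0 in \<open>auto simp: slice_s_metric_eq sym2_commute\<close>)

section \<open>The restriction of h_U to the slices {alpha = alpha0}\<close>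

lemma slice_alpha_metric_eq:
  assumes a0: "0 < Im a0" and q: "q \<in> CxH"
  shows "slice_alpha_metric a0 q j k = of_real (sym2 (1 / Im (q$2)) (- Im (q$1) / Im (q$2)^2)
      (1 / (4 * Im (q$2)^2) + Im (q$1)^2 / Im (q$2)^3) j k)"
proof -
  have "0 < Im (q$2)" using q by (simp add: CxH_def)
  then show ?thesis
    using exhaust_2[of j] exhaust_2[of k] a0
    by (auto simp: slice_alpha_metric_def hUform_def hform_def gXS_def gL2_def gWP_def acoef_def
        axis_def complex_diff_cnj field_simps power2_eq_square power3_eq_cube complex_eq_iff)
qed

lemma slice_alpha_kahler:
  assumes a0: "0 < Im a0"
  shows "kahler_on CxH (slice_alpha_metric a0)"
proof (rule kahler_on_CxH_Im_dependent[
      where G = "\<lambda>j k y t. sym2 (1 / t) (- y / t^2) (1 / (4 * t^2) + y^2 / t^3) j k"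
      and Dy = "\<lambda>j k y t. sym2 0 (- 1 / t^2) (2 * y / t^3) j k"
      and Dt = "\<lambda>j k y t. sym2 (- 1 / t^2) (2 * y / t^3) (- 1 / (2 * t^3) - 3 * y^2 / t^4) j k"])
  fix j k :: 2 and y t :: real assume t: "0 < t"
  show "((\<lambda>y. sym2 (1 / t) (- y / t^2) (1 / (4 * t^2) + y^2 / t^3) j k) has_real_derivative
      sym2 0 (- 1 / t^2) (2 * y / t^3) j k) (at y)"
    using t by (intro has_real_derivative_sym2)
      (auto intro!: derivative_eq_intros simp: field_simps power2_eq_square power3_eq_cube)
  show "((\<lambda>t. sym2 (1 / t) (- y / t^2) (1 / (4 * t^2) + y^2 / t^3) j k) has_real_derivative
      sym2 (- 1 / t^2) (2 * y / t^3) (- 1 / (2 * t^3) - 3 * y^2 / t^4) j k) (at t)"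
    using t by (intro has_real_derivative_sym2)
      (auto intro!: derivative_eq_intros simp: field_simps power2_eq_square power3_eq_cube power4_eq_xxxx)
  show "sym2 (- 1 / t^2) (2 * y / t^3) (- 1 / (2 * t^3) - 3 * y^2 / t^4) 1 k
      = sym2 0 (- 1 / t^2) (2 * y / t^3) 2 k"
    using exhaust_2[of k] by auto
  show "0 < sym2 (1 / t) (- y / t^2) (1 / (4 * t^2) + y^2 / t^3) 1 1" using t by simp
  have det: "sym2 (1 / t) (- y / t^2) (1 / (4 * t^2) + y^2 / t^3) 1 1
      * sym2 (1 / t) (- y / t^2) (1 / (4 * t^2) + y^2 / t^3) 2 2
      - (sym2 (1 / t) (- y / t^2) (1 / (4 * t^2) + y^2 / t^3) 1 2)^2 = 1 / (4 * t^3)"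
    using t by (simp add: field_simps power2_eq_square power3_eq_cube)
  show "0 < sym2 (1 / t) (- y / t^2) (1 / (4 * t^2) + y^2 / t^3) 1 1
      * sym2 (1 / t) (- y / t^2) (1 / (4 * t^2) + y^2 / t^3) 2 2
      - (sym2 (1 / t) (- y / t^2) (1 / (4 * t^2) + y^2 / t^3) 1 2)^2"
    unfolding det using t by simp
next
  fix p :: "complex^2" and j k :: 2 assume "p \<in> CxH"
  then have "Im (p$2) \<noteq> 0" by (simp add: CxH_def)
  then show "(\<lambda>q. sym2 (1 / Im (q$2)) (- Im (q$1) / Im (q$2)^2)
      (1 / (4 * Im (q$2)^2) + Im (q$1)^2 / Im (q$2)^3) j k) differentiable at p"
    by (intro differentiable_sym2) (auto intro!: derivative_intros)
qed (use a0 in \<open>auto simp: slice_alpha_metric_eq sym2_commute\<close>)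

section \<open>Invariance of h_U under the deck group\<close>

text \<open>Translating \<open>z\<close> by \<open>n + m s\<close> shifts \<open>a = - Im z / Im s\<close> by \<open>-m\<close>, which is exactly
  compensated by the differential \<open>dz \<mapsto> dz + m ds\<close> in the term \<open>|dz + a ds|\<^sup>2\<close>.\<close>

lemma acoef_gact:
  assumes "0 < Im s"
  shows "acoef (z + of_int n + of_int m * s) s = acoef z s - of_int m"
proof -
  have "s - cnj s \<noteq> 0" using assms by (simp add: complex_diff_cnj complex_eq_iff)
  then show ?thesis unfolding acoef_def by (simp add: field_simps)
qed

lemma hUform_gact_invariant:
  assumes "0 < Im s"
  shows "hUform (gact n m (z, \<alpha>, s)) (dgact m v) (dgact m w) = hUform (z, \<alpha>, s) v w"
proof -
  obtain v1 v2 v3 where v: "v = (v1, v2, v3)" by (cases v) auto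
  obtain w1 w2 w3 where w: "w = (w1, w2, w3)" by (cases w) auto
  show ?thesis
    unfolding v w gact_def dgact_def hUform_def hform_def
    by (simp add: acoef_gact[OF assms]) (simp add: algebra_simps)
qed

theorem mainTheorem1:
  shows "(\<forall>s0. 0 < Im s0 \<longrightarrow> kahler_on CxH (slice_s_metric s0))
       \<and> (\<forall>\<alpha>0. 0 < Im \<alpha>0 \<longrightarrow> kahler_on CxH (slice_alpha_metric \<alpha>0))
       \<and> (\<forall>n m z \<alpha> s v w. 0 < Im \<alpha> \<longrightarrow> 0 < Im s \<longrightarrow>
            hUform (gact n m (z, \<alpha>, s)) (dgact m v) (dgact m w) = hUform (z, \<alpha>, s) v w)"
  using slice_s_kahler slice_alpha_kahler hUform_gact_invariant by blast

end
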